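(* Let $X,Y$ be compact topological spaces, $c\in C(X\times Y)$, fix $x_0\in X$, and for each $k>0$ let $\mu^{(k)}\in\mathcal{P}(X)$, $\nu^{(k)}\in\mathcal{P}(Y)$. Then the union $\bigcup_{k>0}S^{(k)}(C(X))$ is relatively compact in $C(X)/\mathbb{R}$; that is, the set $\{w-w(x_0):\ w\in S^{(k)}(C(X))\text{ for some }k>0\}$ is relatively compact in $C(X)$ with the sup-norm.
   Context: For $k>0$, $u\in C(X)$, $v\in C(Y)$: $v^{(k)}[u](y)=k^{-1}\log\int_Xe^{-kc(x,y)-ku(x)}d\mu^{(k)}(x)$, $u^{(k)}[v](x)=k^{-1}\log\int_Ye^{-kc(x,y)-kv(y)}d\nu^{(k)}(y)$, and $S^{(k)}(u)=u^{(k)}[v^{(k)}[u]]$. *)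

theory Defs
  imports "HOL-Probability.Probability"
begin

definition v_k :: "real \<Rightarrow> ('a \<Rightarrow> 'b \<Rightarrow> real) \<Rightarrow> 'a measure \<Rightarrow> ('a \<Rightarrow> real) \<Rightarrow> 'b \<Rightarrow> real" where
  "v_k k c \<mu> u y = (1 / k) * ln (\<integral>x. exp (- k * c x y - k * u x) \<partial>\<mu>)"

definition u_k :: "real \<Rightarrow> ('a \<Rightarrow> 'b \<Rightarrow> real) \<Rightarrow> 'b measure \<Rightarrow> ('b \<Rightarrow> real) \<Rightarrow> 'a \<Rightarrow> real" where
  "u_k k c \<nu> v x = (1 / k) * ln (\<integral>y. exp (- k * c x y - k * v y) \<partial>\<nu>)"

definition S_k :: "real \<Rightarrow> ('a \<Rightarrow> 'b \<Rightarrow> real) \<Rightarrow> 'a measure \<Rightarrow> 'b measure \<Rightarrow> ('a \<Rightarrow> real) \<Rightarrow> 'a \<Rightarrow> real" where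
  "S_k k c \<mu> \<nu> u = u_k k c \<nu> (v_k k c \<mu> u)"

end

theory Submission
  imports Defs
begin

(* Since u_k k c nu v x is (1/k) ln of the nu-integral of exp (- k c x y) times a positive
   weight independent of x, moving x to x' changes it by at most sup_y |c x y - c x' y|,
   uniformly in k, v and the measures.  So every S_k(u) - S_k(u)(x0) is bounded by twice
   sup |c| and has the modulus of continuity of x |-> c x in the sup norm over the compact Y.
   The family is uniformly bounded and equicontinuous, and Arzela-Ascoli concludes. *)

lemma (in prob_space) integral_pos:
  fixes f :: "'a \<Rightarrow> real"
  assumes "integrable M f" "\<And>x. 0 < f x"
  shows "0 < (\<integral>x. f x \<partial>M)"
proof -
  have "(\<integral>x. f x \<partial>M) \<noteq> 0"
  proof
    assume "(\<integral>x. f x \<partial>M) = 0"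
    then have "AE x in M. f x = 0"
      using integral_nonneg_eq_0_iff_AE[OF assms(1)] assms(2) by (simp add: less_imp_le)
    then have "AE x in M. False"
      by eventually_elim (metis assms(2) less_irrefl)
    then show False by simp
  qed
  moreover have "0 \<le> (\<integral>x. f x \<partial>M)"
    using assms(2) by (intro integral_nonneg_AE AE_I2 less_imp_le)
  ultimately show ?thesis by simp
qed

lemma integrable_of_ratio_bound:
  fixes f g :: "'a \<Rightarrow> real"
  assumes g: "integrable M g"
    and ratio: "(\<lambda>x. f x / g x) \<in> borel_measurable M"
    and pos: "\<And>x. 0 < g x"
    and bound: "\<And>x. \<bar>f x\<bar> \<le> C * g x"
  shows "integrable M f"
proof (rule Bochner_Integration.integrable_bound)
  show "integrable M (\<lambda>x. C * g x)" using g by simp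
  have "f = (\<lambda>x. g x * (f x / g x))" using pos by (simp add: less_imp_neq[symmetric])
  then show "f \<in> borel_measurable M"
    using borel_measurable_integrable[OF g] ratio by (metis borel_measurable_times)
  show "AE x in M. norm (f x) \<le> norm (C * g x)"
    using bound by (intro AE_I2) (metis abs_ge_self order.trans real_norm_def)
qed

text \<open>The two-sided bound makes f and g integrable together; otherwise both integrals
  are 0 by convention, and the claim reduces to 0 \<le> e.\<close>

lemma (in prob_space) ln_integral_le_add:
  fixes f g :: "'a \<Rightarrow> real"
  assumes ratio: "(\<lambda>x. f x / g x) \<in> borel_measurable M"
    and pos: "\<And>x. 0 < f x" "\<And>x. 0 < g x"
    and bound: "\<And>x. f x \<le> exp e * g x" "\<And>x. g x \<le> exp e * f x"
  shows "ln (\<integral>x. f x \<partial>M) \<le> e + ln (\<integral>x. g x \<partial>M)"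
proof (cases "integrable M g")
  case True
  have f: "integrable M f"
    by (rule integrable_of_ratio_bound[OF True ratio pos(2), where C = "exp e"]) (simp add: abs_of_pos pos(1) bound(1))
  have "(\<integral>x. f x \<partial>M) \<le> (\<integral>x. exp e * g x \<partial>M)"
    using True f bound by (intro integral_mono) auto
  then have "ln (\<integral>x. f x \<partial>M) \<le> ln (exp e * (\<integral>x. g x \<partial>M))"
    using integral_pos[OF f pos(1)] by simp
  also have "\<dots> = e + ln (\<integral>x. g x \<partial>M)"
    using integral_pos[OF True pos(2)] by (simp add: ln_mult)
  finally show ?thesis .
next
  case False
  have ratio': "(\<lambda>x. g x / f x) \<in> borel_measurable M"
    using borel_measurable_divide[OF borel_measurable_const ratio, of 1] by simp
  have "\<not> integrable M f"
  proof
    assume "integrable M f"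
    then have "integrable M g"
      by (rule integrable_of_ratio_bound[OF _ ratio' pos(1), where C = "exp e"]) (simp add: abs_of_pos pos(2) bound(2))
    with False show False ..
  qed
  moreover have "0 \<le> e"
  proof -
    have "f x \<le> exp e * (exp e * f x)" for x
      using order_trans[OF bound(1) mult_left_mono[OF bound(2)]] by simp
    then have "1 * f x \<le> (exp e * exp e) * f x" for x by (simp add: mult.assoc)
    then have "1 \<le> exp e * exp e" using pos(1) mult_le_cancel_right_pos by blast
    then show ?thesis by (simp add: exp_add[symmetric])
  qed
  ultimately show ?thesis using False by (simp add: not_integrable_integral_eq)
qed

lemma u_k_le_add:
  fixes c :: "'a \<Rightarrow> 'b \<Rightarrow> real"
  assumes \<nu>: "prob_space \<nu>" and k: "0 < k"
    and meas: "c x \<in> borel_measurable \<nu>" "c x' \<in> borel_measurable \<nu>"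
    and close: "\<And>y. \<bar>c x y - c x' y\<bar> \<le> \<epsilon>"
  shows "u_k k c \<nu> v x \<le> \<epsilon> + u_k k c \<nu> v x'"
proof -
  define g where "g z y = exp (- k * c z y - k * v y)" for z y
  have g_eq: "g z y = exp (k * (c z' y - c z y)) * g z' y" for z z' y
    by (simp add: g_def exp_add[symmetric] algebra_simps)
  have bound: "g z y \<le> exp (k * \<epsilon>) * g z' y" if "\<bar>c z y - c z' y\<bar> \<le> \<epsilon>" for z z' y
  proof -
    have "k * (c z' y - c z y) \<le> k * \<epsilon>" using that k by (intro mult_left_mono) auto
    then show ?thesis unfolding g_eq[of z y z'] by (intro mult_right_mono) (auto simp: g_def)
  qed
  have "ln (\<integral>y. g x y \<partial>\<nu>) \<le> k * \<epsilon> + ln (\<integral>y. g x' y \<partial>\<nu>)"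
  proof (rule prob_space.ln_integral_le_add[OF \<nu>])
    have "g x y / g x' y = exp (k * (c x' y - c x y))" for y
      unfolding g_eq[of x y x'] by (simp add: g_def)
    then have "(\<lambda>y. g x y / g x' y) = (\<lambda>y. exp (k * (c x' y - c x y)))" by simp
    then show "(\<lambda>y. g x y / g x' y) \<in> borel_measurable \<nu>" using meas by simp
    show "g x y \<le> exp (k * \<epsilon>) * g x' y" "g x' y \<le> exp (k * \<epsilon>) * g x y" for y
      using close[of y] by (auto intro!: bound simp: abs_minus_commute)
  qed (auto simp: g_def)
  then have "(1 / k) * ln (\<integral>y. g x y \<partial>\<nu>) \<le> (1 / k) * (k * \<epsilon> + ln (\<integral>y. g x' y \<partial>\<nu>))"
    using k by (intro mult_left_mono) auto
  then show ?thesis using k unfolding u_k_def g_def by (simp add: algebra_simps)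
qed

lemma abs_S_k_diff_le:
  fixes c :: "'a \<Rightarrow> 'b \<Rightarrow> real"
  assumes "prob_space \<nu>" "0 < k" "\<And>z. c z \<in> borel_measurable \<nu>"
    and "\<And>y. \<bar>c x y - c x' y\<bar> \<le> \<epsilon>"
  shows "\<bar>S_k k c \<mu> \<nu> u x - S_k k c \<mu> \<nu> u x'\<bar> \<le> \<epsilon>"
proof -
  have close': "\<And>y. \<bar>c x' y - c x y\<bar> \<le> \<epsilon>" using assms(4) by (simp add: abs_minus_commute)
  show ?thesis
    using u_k_le_add[OF assms(1,2) assms(3)[of x] assms(3)[of x'] assms(4), where v = "v_k k c \<mu> u"]
      u_k_le_add[OF assms(1,2) assms(3)[of x'] assms(3)[of x] close', where v = "v_k k c \<mu> u"]
    unfolding S_k_def by (simp add: abs_le_iff)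
qed

lemma continuous_on_slice:
  assumes "continuous_on UNIV (\<lambda>p. c (fst p) (snd p))"
  shows "continuous_on UNIV (c x)"
proof -
  have "continuous_on UNIV (\<lambda>y. (\<lambda>p. c (fst p) (snd p)) (x, y))"
    by (intro continuous_on_compose2[OF assms] continuous_intros) auto
  then show ?thesis by simp
qed

lemma uniform_nhd_of_compact_factor:
  fixes c :: "'a::topological_space \<Rightarrow> 'b::topological_space \<Rightarrow> real"
  assumes "compact (UNIV :: 'b set)" and cont: "continuous_on UNIV (\<lambda>p. c (fst p) (snd p))"
    and "0 < \<epsilon>"
  obtains U where "open U" "x \<in> U" "\<And>x' y. x' \<in> U \<Longrightarrow> \<bar>c x' y - c x y\<bar> < \<epsilon>"
proof -
  have "continuous_on UNIV (\<lambda>p. \<bar>c (fst p) (snd p) - c x (snd p)\<bar>)"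
    by (intro continuous_intros cont continuous_on_compose2[OF continuous_on_slice[OF cont]]) auto
  then have "open {p. \<bar>c (fst p) (snd p) - c x (snd p)\<bar> < \<epsilon>}"
    by (simp add: open_Collect_less)
  moreover have "{x} \<times> UNIV \<subseteq> {p. \<bar>c (fst p) (snd p) - c x (snd p)\<bar> < \<epsilon>}"
    using \<open>0 < \<epsilon>\<close> by auto
  ultimately have "\<exists>U. x \<in> U \<and> open U \<and> U \<times> UNIV \<subseteq> {p. \<bar>c (fst p) (snd p) - c x (snd p)\<bar> < \<epsilon>}"
    by (rule Elementary_Topology.tube_lemma[OF assms(1)])
  then obtain U where U: "x \<in> U" "open U"
    "U \<times> UNIV \<subseteq> {p. \<bar>c (fst p) (snd p) - c x (snd p)\<bar> < \<epsilon>}"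
    by blast
  show ?thesis
  proof (rule that[OF U(2,1)])
    fix x' and y :: 'b assume "x' \<in> U"
    then have "(x', y) \<in> U \<times> UNIV" by simp
    with U(3) have "(x', y) \<in> {p. \<bar>c (fst p) (snd p) - c x (snd p)\<bar> < \<epsilon>}" by (rule subsetD)
    then show "\<bar>c x' y - c x y\<bar> < \<epsilon>" by simp
  qed
qed

lemma mcomplete_bcontfun:
  "Metric_space.mcomplete (UNIV :: ('a::topological_space \<Rightarrow>\<^sub>C 'b::complete_space) set) dist"
  unfolding Met_TC.mcomplete_def MCauchy_iff_Cauchy limitin_iff_tendsto
proof (intro allI impI)
  fix f :: "nat \<Rightarrow> ('a \<Rightarrow>\<^sub>C 'b)" assume "Cauchy f"
  then obtain g where "uniform_limit UNIV f g sequentially"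
    using uniformly_convergent_eq_cauchy[of "\<lambda>_. True" f]
    unfolding Cauchy_def uniform_limit_sequentially_iff
    by (metis dist_fun_lt_imp_dist_val_lt)
  from uniform_limit_bcontfunE[OF this sequentially_bot]
  show "\<exists>l. f \<longlonglongrightarrow> l" by metis
qed

lemma finite_image_round_restrict:
  fixes A :: "('a \<Rightarrow> real) set"
  assumes "finite T" "0 < \<epsilon>" "\<And>f x. f \<in> A \<Longrightarrow> \<bar>f x\<bar> \<le> B"
  shows "finite ((\<lambda>f. restrict (\<lambda>x. round (f x / \<epsilon>)) T) ` A)"
proof -
  define N where "N = \<lceil>B / \<epsilon>\<rceil>"
  have "round (f x / \<epsilon>) \<in> {-N..N}" if "f \<in> A" for f x
  proof -
    have "\<bar>f x / \<epsilon>\<bar> \<le> B / \<epsilon>"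
      using assms(2) assms(3)[OF that] by (simp add: abs_divide divide_right_mono)
    then have "\<bar>f x / \<epsilon>\<bar> \<le> of_int N" unfolding N_def by (meson le_of_int_ceiling order.trans)
    then have "- of_int N \<le> f x / \<epsilon> \<and> f x / \<epsilon> \<le> of_int N" by (metis abs_le_D1 abs_le_D2 minus_le_iff)
    then have "real_of_int (round (f x / \<epsilon>)) < real_of_int (N + 1)"
      "real_of_int (- N - 1) < real_of_int (round (f x / \<epsilon>))"
      using of_int_round_le[of "f x / \<epsilon>"] of_int_round_ge[of "f x / \<epsilon>"] by simp_all
    then show ?thesis by (simp only: of_int_less_iff) auto
  qed
  then have "(\<lambda>f. restrict (\<lambda>x. round (f x / \<epsilon>)) T) ` A \<subseteq> PiE T (\<lambda>_. {-N..N})" by auto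
  moreover have "finite (PiE T (\<lambda>_. {-N..N}))" using assms(1) by (simp add: finite_PiE)
  ultimately show ?thesis by (rule finite_subset)
qed

lemma dist_bcontfun_le_of_net:
  fixes f g :: "'a::topological_space \<Rightarrow>\<^sub>C real"
  assumes cover: "UNIV \<subseteq> (\<Union>t\<in>T. U t)"
    and osc: "\<And>t x. t \<in> T \<Longrightarrow> x \<in> U t \<Longrightarrow> \<bar>f x - f t\<bar> \<le> \<epsilon> \<and> \<bar>g x - g t\<bar> \<le> \<epsilon>"
    and near: "\<And>t. t \<in> T \<Longrightarrow> \<bar>f t - g t\<bar> \<le> \<epsilon>"
  shows "dist f g \<le> 3 * \<epsilon>"
proof (rule dist_bound)
  fix x
  obtain t where "t \<in> T" "x \<in> U t" using cover by blast
  with osc near show "dist (f x) (g x) \<le> 3 * \<epsilon>" by (fastforce simp: dist_real_def)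
qed

lemma mtotally_bounded_bounded_equicontinuous:
  fixes A :: "('a::topological_space \<Rightarrow>\<^sub>C real) set"
  assumes cpt: "compact (UNIV :: 'a set)"
    and bounded: "\<And>f x. f \<in> A \<Longrightarrow> \<bar>f x\<bar> \<le> B"
    and equicont: "\<And>x \<epsilon>. 0 < \<epsilon> \<Longrightarrow> \<exists>U. open U \<and> x \<in> U \<and> (\<forall>f\<in>A. \<forall>x'\<in>U. \<bar>f x' - f x\<bar> \<le> \<epsilon>)"
  shows "Met_TC.mtotally_bounded A"
  unfolding Met_TC.mtotally_bounded_def
proof (intro allI impI)
  fix e :: real assume "0 < e"
  define \<epsilon> where "\<epsilon> = e / 4"
  have "0 < \<epsilon>" using \<open>0 < e\<close> by (simp add: \<epsilon>_def)
  obtain U where U: "\<And>x. open (U x) \<and> x \<in> U x \<and> (\<forall>f\<in>A. \<forall>x'\<in>U x. \<bar>f x' - f x\<bar> \<le> \<epsilon>)"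
    using equicont[OF \<open>0 < \<epsilon>\<close>] by metis
  obtain T where T: "finite T" "UNIV \<subseteq> (\<Union>t\<in>T. U t)"
  proof (rule compactE_image[OF cpt, where C = UNIV and f = U])
    show "open (U t)" "UNIV \<subseteq> (\<Union>t\<in>UNIV. U t)" for t using U by blast+
  qed auto
  \<comment> \<open>A bounded family has finitely many rounding patterns on the finite net T, and
    functions sharing a pattern are 3\<epsilon>-close.\<close>
  define pat where "pat f = restrict (\<lambda>x. round (apply_bcontfun f x / \<epsilon>)) T" for f
  have "pat ` A = (\<lambda>f. restrict (\<lambda>x. round (f x / \<epsilon>)) T) ` apply_bcontfun ` A"
    by (simp add: pat_def image_image)
  moreover have "finite ((\<lambda>f. restrict (\<lambda>x. round (f x / \<epsilon>)) T) ` apply_bcontfun ` A)"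
    using bounded by (intro finite_image_round_restrict[OF T(1) \<open>0 < \<epsilon>\<close>]) blast
  ultimately have "finite (pat ` A)" by simp
  then obtain K where K: "K \<subseteq> A" "finite K" "pat ` A = pat ` K"
    using finite_subset_image[of "pat ` A" pat A] by blast
  have "\<exists>g\<in>K. dist g f < e" if "f \<in> A" for f
  proof -
    obtain g where g: "g \<in> K" "pat g = pat f" using K(3) \<open>f \<in> A\<close> by (metis imageE imageI)
    have "\<bar>f t - g t\<bar> \<le> \<epsilon>" if "t \<in> T" for t
    proof -
      have "round (f t / \<epsilon>) = round (g t / \<epsilon>)" using fun_cong[OF g(2), of t] that by (simp add: pat_def)
      then have "\<bar>f t / \<epsilon> - g t / \<epsilon>\<bar> < 1" by (rule round_eq_imp_diff_1)
      then show ?thesis using \<open>0 < \<epsilon>\<close> by (simp add: diff_divide_distrib[symmetric] abs_divide)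
    qed
    then have "dist f g \<le> 3 * \<epsilon>"
      using U T(2) \<open>f \<in> A\<close> g(1) K(1) by (intro dist_bcontfun_le_of_net[where U = U]) auto
    then have "dist g f < e" using \<open>0 < \<epsilon>\<close> by (simp add: \<epsilon>_def dist_commute)
    with g(1) show ?thesis by blast
  qed
  then show "\<exists>K. finite K \<and> K \<subseteq> A \<and> A \<subseteq> (\<Union>g\<in>K. Met_TC.mball g e)"
    using K by (force simp: dist_commute)
qed

lemma compact_closure_bounded_equicontinuous:
  fixes A :: "('a::topological_space \<Rightarrow>\<^sub>C real) set"
  assumes "compact (UNIV :: 'a set)"
    and "\<And>f x. f \<in> A \<Longrightarrow> \<bar>f x\<bar> \<le> B"
    and "\<And>x \<epsilon>. 0 < \<epsilon> \<Longrightarrow> \<exists>U. open U \<and> x \<in> U \<and> (\<forall>f\<in>A. \<forall>x'\<in>U. \<bar>f x' - f x\<bar> \<le> \<epsilon>)"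
  shows "compact (closure A)"
proof -
  have "compactin Met_TC.mtopology (Met_TC.mtopology closure_of A)"
    using mtotally_bounded_bounded_equicontinuous[OF assms]
      Met_TC.mtotally_bounded_eq_compact_closure_of[OF mcomplete_bcontfun] by blast
  then show ?thesis by simp
qed

theorem lemma2p12:
  fixes c :: "'a::topological_space \<Rightarrow> 'b::topological_space \<Rightarrow> real"
    and x0 :: 'a
    and \<mu> :: "real \<Rightarrow> 'a measure"
    and \<nu> :: "real \<Rightarrow> 'b measure"
  assumes "compact (UNIV :: 'a set)"
    and "compact (UNIV :: 'b set)"
    and "continuous_on UNIV (\<lambda>p. c (fst p) (snd p))"
    and "\<And>k. k > 0 \<Longrightarrow> prob_space (\<mu> k) \<and> sets (\<mu> k) = sets (borel :: 'a measure)"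
    and "\<And>k. k > 0 \<Longrightarrow> prob_space (\<nu> k) \<and> sets (\<nu> k) = sets (borel :: 'b measure)"
  shows "compact (closure {w :: 'a \<Rightarrow>\<^sub>C real. \<exists>k > 0. \<exists>u :: 'a \<Rightarrow> real. continuous_on UNIV u \<and>
            (\<forall>x. apply_bcontfun w x = S_k k c (\<mu> k) (\<nu> k) u x - S_k k c (\<mu> k) (\<nu> k) u x0)})"
    (is "compact (closure ?A)")
proof -
  obtain M where M: "\<And>x y. \<bar>c x y\<bar> \<le> M"
    using compact_imp_bounded[OF compact_continuous_image[OF assms(3) compact_Times[OF assms(1,2), unfolded UNIV_Times_UNIV]]]
    unfolding bounded_iff by force
  have meas: "c x \<in> borel_measurable (\<nu> k)" if "0 < k" for x k
    unfolding measurable_cong_sets[OF conjunct2[OF assms(5)[OF that]] refl]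
    by (rule borel_measurable_continuous_onI[OF continuous_on_slice[OF assms(3)]])
  have osc: "\<bar>f x - f x'\<bar> \<le> \<epsilon>" if "f \<in> ?A" "\<And>y. \<bar>c x y - c x' y\<bar> \<le> \<epsilon>" for f x x' \<epsilon>
  proof -
    from \<open>f \<in> ?A\<close> obtain k u where k: "0 < k"
      and f: "\<And>x. f x = S_k k c (\<mu> k) (\<nu> k) u x - S_k k c (\<mu> k) (\<nu> k) u x0" by blast
    have "\<bar>S_k k c (\<mu> k) (\<nu> k) u x - S_k k c (\<mu> k) (\<nu> k) u x'\<bar> \<le> \<epsilon>"
      using conjunct1[OF assms(5)[OF k]] k meas[OF k] that(2) by (rule abs_S_k_diff_le)
    then show ?thesis by (simp add: f)
  qed
  have "\<bar>f x\<bar> \<le> 2 * M" if "f \<in> ?A" for f x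
  proof -
    have "\<bar>c x y - c x0 y\<bar> \<le> 2 * M" for y
      using abs_triangle_ineq4[of "c x y" "c x0 y"] M[of x y] M[of x0 y] by linarith
    moreover have "f x0 = 0" using that by auto
    ultimately show ?thesis using osc[OF that, of x x0 "2 * M"] by simp
  qed
  moreover have "\<exists>U. open U \<and> x \<in> U \<and> (\<forall>f\<in>?A. \<forall>x'\<in>U. \<bar>f x' - f x\<bar> \<le> \<epsilon>)" if \<epsilon>: "0 < \<epsilon>" for x \<epsilon>
  proof -
    obtain U where U: "open U" "x \<in> U" "\<And>x' y. x' \<in> U \<Longrightarrow> \<bar>c x' y - c x y\<bar> < \<epsilon>"
      using uniform_nhd_of_compact_factor[OF assms(2,3) \<epsilon>] by blast
    have "\<bar>f x' - f x\<bar> \<le> \<epsilon>" if "f \<in> ?A" "x' \<in> U" for f x'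
      using U(3)[OF \<open>x' \<in> U\<close>] by (intro osc[OF \<open>f \<in> ?A\<close>] less_imp_le)
    with U(1,2) show ?thesis by blast
  qed
  ultimately show ?thesis by (rule compact_closure_bounded_equicontinuous[OF assms(1)])
qed

end
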